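(* For $1\leq d<m$, let $U_m^d$ denote the uniform matroid of rank $d$ on $m$ elements, let $F_m^d(z)=\sum_{i=0}^{d}\binom{m}{i}z^i$ be its rank-generating function, and let $H_m^d(q):=(1-q)^{d}F_m^d\left(\frac{q}{1-q}\right)$. If $q\in\mathbb{C}$ satisfies $H_m^d(q)=0$, then $(m-d)^{-1}\leq |q|\leq d(m-1)^{-1}$. In particular, $H_m^d(q)$ is Schur quasi-stable (all its complex zeros satisfy $|q|\leq 1$), i.e. $U_m^d$ belongs to the class of set systems whose $H$-polynomial is Schur quasi-stable.
   Context: For a set system $\Omega$ of degree $d$ (maximum face size) with $f_i$ faces of size $i$, the rank-generating function is $F_\Omega(z)=\sum_{i=0}^d f_i z^i$, and the $H$-polynomial is $H_\Omega(q):=(1-q)^{d}F_\Omega\left(\frac{q}{1-q}\right)$. A polynomial is Schur quasi-stable if all its complex zeros satisfy $|q|\leq 1$. *)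

theory Defs
  imports "HOL-Analysis.Analysis" "HOL-Computational_Algebra.Polynomial"
begin

definition unif_rank_gen :: "nat \<Rightarrow> nat \<Rightarrow> complex poly" where
  "unif_rank_gen m d = (\<Sum>i\<le>d. monom (of_nat (m choose i)) i)"

text \<open>H-polynomial (1-q)^d F(q/(1-q)), written out as the polynomial
  sum_{i=0}^d f_i q^i (1-q)^(d-i) with f_i the coefficients of F, which equals it for all q with q \<noteq> 1.\<close>
definition unif_H :: "nat \<Rightarrow> nat \<Rightarrow> complex poly" where
  "unif_H m d = (\<Sum>i\<le>d. smult (coeff (unif_rank_gen m d) i) ([:0, 1:] ^ i * [:1, -1:] ^ (d - i)))"

definition schur_quasi_stable :: "complex poly \<Rightarrow> bool" where
  "schur_quasi_stable p \<longleftrightarrow> (\<forall>q. poly p q = 0 \<longrightarrow> cmod q \<le> 1)"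


end

(* With k = m - d - 1, Pascal's rule and induction on d turn the H-polynomial of U_m^d into
   H(q) = sum_{j<=d} C(k+j, j) q^j, the degree-d truncation of (1 - q)^-(k+1).  The ratios
   (j+1) / (k+j+1) of consecutive coefficients increase from 1/(k+1) to d/(k+d), so the
   Enestrom-Kakeya theorem confines all zeros to the annulus 1/(k+1) <= |q| <= d/(k+d). *)

theory Submission imports Defs begin

lemma one_minus_mult_power_sum:
  fixes c :: "nat \<Rightarrow> 'a::comm_ring_1"
  shows "(1 - z) * (\<Sum>i\<le>d. c i * z ^ i) =
    c 0 + (\<Sum>i<d. (c (Suc i) - c i) * z ^ Suc i) - c d * z ^ Suc d"
  by (induction d) (simp_all add: algebra_simps)

lemma power_sum_reverse:
  fixes c :: "nat \<Rightarrow> 'a::field"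
  assumes "z \<noteq> 0"
  shows "(\<Sum>i\<le>d. c i * z ^ i) = z ^ d * (\<Sum>i\<le>d. c (d - i) * inverse z ^ i)"
proof -
  have "(\<Sum>i\<le>d. c i * z ^ i) = (\<Sum>i\<le>d. c (d - i) * z ^ (d - i))"
    using sum.atLeastAtMost_rev[of "\<lambda>i. c i * z ^ i" 0 d] by (simp add: atLeast0AtMost)
  also have "\<dots> = (\<Sum>i\<le>d. z ^ d * (c (d - i) * inverse z ^ i))"
    using assms by (intro sum.cong) (auto simp: power_diff power_inverse field_simps)
  finally show ?thesis by (simp add: sum_distrib_left)
qed

lemma enestrom_kakeya_monotone:
  fixes a :: "nat \<Rightarrow> real" and z :: "'a::real_normed_field"
  assumes pos: "\<And>i. i \<le> d \<Longrightarrow> 0 < a i"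
    and mono: "\<And>i. i < d \<Longrightarrow> a i \<le> a (Suc i)"
    and root: "(\<Sum>i\<le>d. of_real (a i) * z ^ i) = 0"
  shows "norm z \<le> 1"
proof (rule ccontr)
  \<comment> \<open>Multiplying the root equation by 1 - z writes a_d z^(d+1) as a combination of lower powers
     with nonnegative coefficients summing to a_d, which is too small once |z| > 1.\<close>
  assume "\<not> norm z \<le> 1"
  then have z: "1 < norm z" by simp
  have eq: "of_real (a d) * z ^ Suc d = of_real (a 0) + (\<Sum>i<d. of_real (a (Suc i) - a i) * z ^ Suc i)"
    using one_minus_mult_power_sum[of z "\<lambda>i. of_real (a i)" d] root by (simp add: algebra_simps)
  have term_le: "norm (of_real (a (Suc i) - a i) * z ^ Suc i) \<le> (a (Suc i) - a i) * norm z ^ d"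
    if "i < d" for i
  proof -
    have "norm z ^ Suc i \<le> norm z ^ d" using z that by (intro power_increasing) auto
    then show ?thesis
      using mono[OF that] by (simp add: norm_mult norm_power mult_left_mono del: of_real_diff)
  qed
  have "a d * norm z ^ Suc d = norm (of_real (a d) * z ^ Suc d)"
    using pos[of d] by (simp add: norm_mult norm_power)
  also have "\<dots> \<le> norm (of_real (a 0) :: 'a) + (\<Sum>i<d. norm (of_real (a (Suc i) - a i) * z ^ Suc i))"
    unfolding eq by (intro order.trans[OF norm_triangle_ineq] add_left_mono norm_sum)
  also have "\<dots> \<le> a 0 * norm z ^ d + (\<Sum>i<d. (a (Suc i) - a i) * norm z ^ d)"
    using pos[of 0] z term_le by (intro add_mono sum_mono) (auto simp: one_le_power)
  also have "\<dots> = a d * norm z ^ d"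
    by (simp only: sum_distrib_right[symmetric] sum_lessThan_telescope) (simp add: algebra_simps)
  also have "\<dots> < a d * norm z ^ Suc d"
    using pos[of d] z by (intro mult_strict_left_mono power_strict_increasing) auto
  finally show False by simp
qed

theorem enestrom_kakeya_upper:
  fixes a :: "nat \<Rightarrow> real" and z :: "'a::real_normed_field"
  assumes pos: "\<And>i. i \<le> d \<Longrightarrow> 0 < a i" and "0 < R"
    and step: "\<And>i. i < d \<Longrightarrow> a i \<le> R * a (Suc i)"
    and root: "(\<Sum>i\<le>d. of_real (a i) * z ^ i) = 0"
  shows "norm z \<le> R"
proof -
  define b where "b i = a i * R ^ i" for i
  have "(\<Sum>i\<le>d. of_real (b i) * (z / of_real R) ^ i) = (\<Sum>i\<le>d. of_real (a i) * z ^ i)"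
    using \<open>0 < R\<close> by (intro sum.cong) (auto simp: b_def power_divide)
  then have "norm (z / of_real R) \<le> 1"
    using pos step \<open>0 < R\<close> root
    by (intro enestrom_kakeya_monotone[of d b]) (auto simp: b_def mult_right_mono mult.assoc mult.left_commute)
  then show ?thesis
    using \<open>0 < R\<close> by (simp add: norm_divide)
qed

theorem enestrom_kakeya_lower:
  fixes a :: "nat \<Rightarrow> real" and z :: "'a::real_normed_field"
  assumes pos: "\<And>i. i \<le> d \<Longrightarrow> 0 < a i" and "0 < r"
    and step: "\<And>i. i < d \<Longrightarrow> r * a (Suc i) \<le> a i"
    and root: "(\<Sum>i\<le>d. of_real (a i) * z ^ i) = 0"
  shows "r \<le> norm z"
proof -
  have "z \<noteq> 0"
    using root pos[of 0] by (cases d) (auto simp: sum.atMost_Suc_shift)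
  \<comment> \<open>The reversed polynomial has root 1/z and coefficient ratios bounded by 1/r.\<close>
  then have "(\<Sum>i\<le>d. of_real (a (d - i)) * inverse z ^ i) = 0"
    using root power_sum_reverse[of z "\<lambda>i. of_real (a i)" d] by simp
  moreover have "a (d - i) \<le> inverse r * a (d - Suc i)" if "i < d" for i
    using step[of "d - Suc i"] that \<open>0 < r\<close> by (simp add: Suc_diff_Suc field_simps)
  ultimately have "norm (inverse z) \<le> inverse r"
    using pos \<open>0 < r\<close> by (intro enestrom_kakeya_upper[of d "\<lambda>i. a (d - i)"]) auto
  then show ?thesis
    using \<open>0 < r\<close> \<open>z \<noteq> 0\<close> by (simp add: norm_inverse inverse_le_iff_le)
qed

lemma binomial_weighted_sum_Suc:
  fixes q :: "'a::comm_ring_1"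
  shows "(\<Sum>i\<le>Suc d. of_nat (Suc N choose i) * q ^ i * (1 - q) ^ (Suc d - i)) =
    (\<Sum>i\<le>d. of_nat (N choose i) * q ^ i * (1 - q) ^ (d - i)) + of_nat (N choose Suc d) * q ^ Suc d"
proof -
  define G where "G n e = (\<Sum>i\<le>e. of_nat (n choose i) * q ^ i * (1 - q) ^ (e - i))" for n e
  have shift: "G n (Suc d) = (1 - q) ^ Suc d + (\<Sum>i\<le>d. of_nat (n choose Suc i) * q ^ Suc i * (1 - q) ^ (d - i))"
    for n unfolding G_def by (subst sum.atMost_Suc_shift) simp
  have pascal: "G (Suc N) (Suc d) = G N (Suc d) + q * G N d"
    unfolding shift by (simp add: G_def sum.distrib sum_distrib_left algebra_simps)
  have "G N (Suc d) = (\<Sum>i\<le>d. of_nat (N choose i) * q ^ i * (1 - q) ^ (Suc d - i))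
      + of_nat (N choose Suc d) * q ^ Suc d"
    unfolding G_def by simp
  also have "(\<Sum>i\<le>d. of_nat (N choose i) * q ^ i * (1 - q) ^ (Suc d - i)) = (1 - q) * G N d"
    unfolding G_def sum_distrib_left by (intro sum.cong) (auto simp: Suc_diff_le)
  finally have "G (Suc N) (Suc d) = G N d + of_nat (N choose Suc d) * q ^ Suc d"
    unfolding pascal by (simp add: algebra_simps)
  then show ?thesis
    unfolding G_def .
qed

lemma binomial_weighted_sum_eq_diagonal_sum:
  fixes q :: "'a::comm_ring_1"
  shows "(\<Sum>i\<le>d. of_nat (k + 1 + d choose i) * q ^ i * (1 - q) ^ (d - i)) =
    (\<Sum>j\<le>d. of_nat (k + j choose j) * q ^ j)"
proof (induction d)
  case 0
  then show ?case by simp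
next
  case (Suc d)
  have "(\<Sum>i\<le>Suc d. of_nat (k + 1 + Suc d choose i) * q ^ i * (1 - q) ^ (Suc d - i)) =
      (\<Sum>i\<le>Suc d. of_nat (Suc (k + 1 + d) choose i) * q ^ i * (1 - q) ^ (Suc d - i))"
    by simp
  also have "\<dots> = (\<Sum>j\<le>d. of_nat (k + j choose j) * q ^ j) + of_nat (k + 1 + d choose Suc d) * q ^ Suc d"
    unfolding binomial_weighted_sum_Suc Suc.IH ..
  also have "\<dots> = (\<Sum>j\<le>Suc d. of_nat (k + j choose j) * q ^ j)"
    by simp
  finally show ?case .
qed

lemma poly_unif_H:
  assumes "d < m"
  shows "poly (unif_H m d) q = (\<Sum>j\<le>d. of_nat (m - d - 1 + j choose j) * q ^ j)"
proof -
  have coeff: "coeff (unif_rank_gen m d) i = of_nat (m choose i)" if "i \<le> d" for i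
    using that by (simp add: unif_rank_gen_def coeff_sum coeff_monom)
  have "poly (unif_H m d) q = (\<Sum>i\<le>d. of_nat (m choose i) * q ^ i * (1 - q) ^ (d - i))"
    unfolding unif_H_def poly_sum by (intro sum.cong) (auto simp: coeff poly_power)
  also have "\<dots> = (\<Sum>j\<le>d. of_nat (m - d - 1 + j choose j) * q ^ j)"
    using binomial_weighted_sum_eq_diagonal_sum[where k = "m - d - 1" and d = d] assms by simp
  finally show ?thesis .
qed

lemma binomial_diagonal_Suc_le:
  "(k + Suc j choose Suc j) \<le> Suc k * (k + j choose j)"
proof -
  have "Suc j * (k + Suc j choose Suc j) = (k + Suc j) * (k + j choose j)"
    using Suc_times_binomial[of j "k + j"] by simp
  also have "\<dots> \<le> (Suc j * Suc k) * (k + j choose j)"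
    by (intro mult_right_mono) auto
  finally show ?thesis by (simp only: mult.assoc mult_le_cancel1)
qed

lemma binomial_diagonal_le_Suc:
  assumes "j < d"
  shows "(k + d) * (k + j choose j) \<le> d * (k + Suc j choose Suc j)"
proof -
  have "Suc j * ((k + d) * (k + j choose j)) = (Suc j * (k + d)) * (k + j choose j)"
    by (rule mult.assoc[symmetric])
  also have "\<dots> \<le> ((k + Suc j) * d) * (k + j choose j)"
    using assms mult_right_mono[of "Suc j" d k] by (intro mult_right_mono) (auto simp: algebra_simps)
  also have "\<dots> = Suc j * (d * (k + Suc j choose Suc j))"
    using Suc_times_binomial[of j "k + j"] by (metis add_Suc_right mult.assoc mult.commute)
  finally show ?thesis by (simp only: mult_le_cancel1)
qed

theorem proposition6p3:
  fixes m d :: nat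
  assumes "1 \<le> d" and "d < m"
  shows "(\<forall>q::complex. poly (unif_H m d) q = 0 \<longrightarrow>
            1 / real (m - d) \<le> cmod q \<and> cmod q \<le> real d / real (m - 1))
         \<and> schur_quasi_stable (unif_H m d)"
proof -
  define k where "k = m - d - 1"
  define a where "a j = real (k + j choose j)" for j
  have bounds: "1 / real (Suc k) \<le> cmod q \<and> cmod q \<le> real d / real (k + d)"
    if "poly (unif_H m d) q = 0" for q
  proof -
    have root: "(\<Sum>j\<le>d. of_real (a j) * q ^ j) = 0"
      using that poly_unif_H[OF \<open>d < m\<close>] by (simp add: a_def k_def)
    have "1 / real (Suc k) * a (Suc j) \<le> a j" for j
      using binomial_diagonal_Suc_le[of k j] by (simp add: a_def field_simps flip: of_nat_mult)
    moreover have "a j \<le> real d / real (k + d) * a (Suc j)" if "j < d" for j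
      using binomial_diagonal_le_Suc[OF that, of k] assms
      by (simp add: a_def field_simps flip: of_nat_mult)
    ultimately show ?thesis
      using root assms
      by (auto intro: enestrom_kakeya_lower[of d a] enestrom_kakeya_upper[of d a] simp: a_def)
  qed
  have "m - d = Suc k" "m - 1 = k + d"
    using assms by (simp_all add: k_def)
  moreover have "real d / real (k + d) \<le> 1"
    using assms by (simp add: divide_le_eq_1)
  ultimately show ?thesis
    unfolding schur_quasi_stable_def using bounds by (metis order_trans)
qed

end
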